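(* In the upper half-plane model of $\mathbb{H}^2$, let $B_i=B(c_i,r_i)$, $i\in\mathbb{N}$, be pairwise disjoint closed Euclidean disks with centers $c_i\in\mathbb{Z}\subset\mathbb{R}$, let $h_i\in\mathrm{Isom}(\mathbb{H}^2)$ be the inversion in $\partial B_i$, and let $C_i=\partial B_i\cap\mathbb{H}^2$. Fix $k\in\mathbb{N}_0$, let $\Gamma_k$ be the subgroup generated by $\{h_i:i>k\}$ and $\Lambda_k$ its limit set. For $n\ge1$ let $I_{k,n}$ be the set of reduced multi-indices $\underline{i}=(i_1,\dots,i_n)$ with all $i_m>k$ and $i_m\ne i_{m+1}$ for all $m$; for such $\underline{i}$ let $c_{\underline{i}}$ and $r_{\underline{i}}$ be the Euclidean center and radius of the semicircle $C_{\underline{i}}=h_{i_1}\circ\cdots\circ h_{i_{n-1}}(C_{i_n})$. Let $\alpha>0$ and suppose that $\sum_{i=k+1}^{\infty}r_i^{\alpha}<\infty$ and that for every $n\ge2$, $$\sum_{\underline{i}\in I_{k,n}}r_{\underline{i}}^{\alpha}\le\sum_{\underline{j}\in I_{k,n-1}}r_{\underline{j}}^{\alpha}.$$ Then $\dim\Lambda_k\le\alpha$.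
   Context: The limit set of a discrete subgroup of $\mathrm{Isom}(\mathbb{H}^2)$ is the accumulation set in $\partial_\infty\mathbb{H}^2=\mathbb{R}\cup\{\infty\}$ of one of its orbits; $\dim$ denotes Hausdorff dimension (computed in the Euclidean metric on $\mathbb{R}$; the point $\infty$ does not affect it). *)

theory Defs
  imports "HOL-Analysis.Analysis"
begin

definition upper :: "complex set" where
  "upper = {z. Im z > 0}"

definition inversion :: "complex \<Rightarrow> real \<Rightarrow> complex \<Rightarrow> complex" where
  "inversion a \<rho> z = a + complex_of_real (\<rho>\<^sup>2) / cnj (z - a)"

definition semicircle :: "complex \<Rightarrow> real \<Rightarrow> complex set" where
  "semicircle a \<rho> = sphere a \<rho> \<inter> upper"

text \<open>Group generated by a set of maps (for involutive generators, such as
  inversions, finite compositions of generators already form the group).\<close>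
inductive_set gen_by :: "('a \<Rightarrow> 'a) set \<Rightarrow> ('a \<Rightarrow> 'a) set" for H where
  gen_id: "id \<in> gen_by H"
| gen_step: "g \<in> gen_by H \<Longrightarrow> h \<in> H \<Longrightarrow> h \<circ> g \<in> gen_by H"

text \<open>Real part of the limit set: accumulation points on the real line of the
  orbit of z0 (the point at infinity does not affect Hausdorff dimension).\<close>
definition limit_set :: "(complex \<Rightarrow> complex) set \<Rightarrow> complex \<Rightarrow> real set" where
  "limit_set G z0 = {x. complex_of_real x islimpt ((\<lambda>g. g z0) ` G)}"

definition reduced_words :: "nat \<Rightarrow> nat \<Rightarrow> nat list set" where
  "reduced_words k n = {w. length w = n \<and> (\<forall>m\<in>set w. k < m) \<and>
      (\<forall>m. Suc m < n \<longrightarrow> w ! m \<noteq> w ! Suc m)}"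

definition gen_map :: "(nat \<Rightarrow> int) \<Rightarrow> (nat \<Rightarrow> real) \<Rightarrow> nat \<Rightarrow> complex \<Rightarrow> complex" where
  "gen_map c r i = inversion (of_int (c i)) (r i)"

definition word_map :: "(nat \<Rightarrow> int) \<Rightarrow> (nat \<Rightarrow> real) \<Rightarrow> nat list \<Rightarrow> complex \<Rightarrow> complex" where
  "word_map c r w = foldr (\<circ>) (map (gen_map c r) w) id"

definition word_semicircle :: "(nat \<Rightarrow> int) \<Rightarrow> (nat \<Rightarrow> real) \<Rightarrow> nat list \<Rightarrow> complex set" where
  "word_semicircle c r w =
     word_map c r (butlast w) ` semicircle (of_int (c (last w))) (r (last w))"

definition word_radius :: "(nat \<Rightarrow> int) \<Rightarrow> (nat \<Rightarrow> real) \<Rightarrow> nat list \<Rightarrow> real" where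
  "word_radius c r w =
     (THE \<rho>. 0 < \<rho> \<and> (\<exists>a::real. word_semicircle c r w = semicircle (complex_of_real a) \<rho>))"

definition hausdorff_pre :: "real \<Rightarrow> real \<Rightarrow> real set \<Rightarrow> ennreal" where
  "hausdorff_pre s \<delta> A =
     (INF U \<in> {U :: nat \<Rightarrow> real set. A \<subseteq> (\<Union>j. U j) \<and>
                 (\<forall>j. bounded (U j) \<and> diameter (U j) \<le> \<delta>)}.
        (\<Sum>j. ennreal (diameter (U j) powr s)))"

definition hausdorff_measure :: "real \<Rightarrow> real set \<Rightarrow> ennreal" where
  "hausdorff_measure s A = (SUP \<delta> \<in> {0<..}. hausdorff_pre s \<delta> A)"

definition hausdorff_dim :: "real set \<Rightarrow> real" where
  "hausdorff_dim A = Inf {s. 0 \<le> s \<and> hausdorff_measure s A = 0}"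

end

theory Submission
  imports Defs
begin

(*
  For a base point z1 outside all disks and a reduced word w of length at least n, the orbit
  point h_w(z1) lies in the disk D_u = h_{u_1} o ... o h_{u_{n-1}}(B_{u_n}) of the length-n prefix
  u of w, and D_u is the Euclidean disk bounded by the circle containing C_u. Taking closures, the
  limit set is covered by the intervals [c_u - r_u, c_u + r_u], u in I_{k,n}, together with the
  countable set of images of the centres c_i. Because the centres are distinct integers and the
  radii are summable, every letter after the first shrinks the radius by a factor at most q^2 for
  a fixed q < 1, so the mesh of these covers tends to 0, while the hypothesis keeps the sum of the
  r_u^alpha below the sum of the r_i^alpha. Hence the s-dimensional Hausdorff measure of the limit
  set vanishes for every s > alpha. The base point is irrelevant because the inversions preserve
  |z - w|^2 / (Im z Im w).
*)

section \<open>Inversions in circles centred on the real line\<close>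

lemma inversion_center [simp]: "inversion a \<rho> a = a"
  by (simp add: inversion_def)

lemma inversion_involutive:
  assumes "\<rho> \<noteq> 0"
  shows "inversion a \<rho> (inversion a \<rho> z) = z"
proof (cases "z = a")
  case False
  then have "cnj (z - a) \<noteq> 0" by simp
  with assms False show ?thesis
    unfolding inversion_def by (simp add: field_simps)
qed simp

lemma inversion_image_eq_vimage:
  assumes "\<rho> \<noteq> 0"
  shows "inversion a \<rho> ` A = inversion a \<rho> -` A"
  using inversion_involutive[OF assms] by (auto intro: image_eqI[where x = "inversion a \<rho> _"])

lemma norm_sub_of_real_power2: "(cmod (z - of_real b))\<^sup>2 = (Re z - b)\<^sup>2 + (Im z)\<^sup>2"
  by (simp add: cmod_power2)

lemma Re_inversion:
  "Re (inversion (of_real a) \<rho> z) = a + \<rho>\<^sup>2 * (Re z - a) / (cmod (z - of_real a))\<^sup>2"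
  unfolding inversion_def norm_sub_of_real_power2 by (simp add: Re_divide power2_eq_square)

lemma Im_inversion:
  "Im (inversion (of_real a) \<rho> z) = \<rho>\<^sup>2 * Im z / (cmod (z - of_real a))\<^sup>2"
  unfolding inversion_def norm_sub_of_real_power2 by (simp add: Im_divide power2_eq_square)

lemma Im_inversion_pos_iff:
  assumes "\<rho> \<noteq> 0"
  shows "0 < Im (inversion (of_real a) \<rho> z) \<longleftrightarrow> 0 < Im z"
proof (cases "z = of_real a")
  case False
  then show ?thesis
    using assms by (simp add: Im_inversion zero_less_divide_iff zero_less_mult_iff)
qed simp

definition inversion_disk :: "real \<Rightarrow> real \<Rightarrow> real \<times> real \<Rightarrow> real \<times> real" where
  "inversion_disk a \<rho> bs = (case bs of (b, s) \<Rightarrow>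
     (a + \<rho>\<^sup>2 * (b - a) / ((b - a)\<^sup>2 - s\<^sup>2), \<rho>\<^sup>2 * s / ((b - a)\<^sup>2 - s\<^sup>2)))"

lemma inversion_circle_identity:
  fixes x y \<beta> s \<rho> :: real
  assumes N: "x\<^sup>2 + y\<^sup>2 \<noteq> 0" and D: "\<beta>\<^sup>2 - s\<^sup>2 \<noteq> 0"
  shows "(\<rho>\<^sup>2 * x / (x\<^sup>2 + y\<^sup>2) - \<rho>\<^sup>2 * \<beta> / (\<beta>\<^sup>2 - s\<^sup>2))\<^sup>2 + (\<rho>\<^sup>2 * y / (x\<^sup>2 + y\<^sup>2))\<^sup>2
           - (\<rho>\<^sup>2 * s / (\<beta>\<^sup>2 - s\<^sup>2))\<^sup>2
       = \<rho> ^ 4 / ((x\<^sup>2 + y\<^sup>2) * (\<beta>\<^sup>2 - s\<^sup>2)) * ((x - \<beta>)\<^sup>2 + y\<^sup>2 - s\<^sup>2)"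
proof -
  define N D where "N = x\<^sup>2 + y\<^sup>2" and "D = \<beta>\<^sup>2 - s\<^sup>2"
  have "(\<rho>\<^sup>2 * x / N - \<rho>\<^sup>2 * \<beta> / D)\<^sup>2 + (\<rho>\<^sup>2 * y / N)\<^sup>2 - (\<rho>\<^sup>2 * s / D)\<^sup>2
      = \<rho> ^ 4 * ((x\<^sup>2 + y\<^sup>2) / N\<^sup>2 - 2 * x * \<beta> / (N * D) + (\<beta>\<^sup>2 - s\<^sup>2) / D\<^sup>2)"
    by (simp add: power2_eq_square algebra_simps diff_divide_distrib add_divide_distrib eval_nat_numeral)
  also have "\<dots> = \<rho> ^ 4 * (N / N\<^sup>2 - 2 * x * \<beta> / (N * D) + D / D\<^sup>2)"
    by (simp add: N_def D_def)
  also have "\<dots> = \<rho> ^ 4 * (D - 2 * x * \<beta> + N) / (N * D)"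
    using N D unfolding N_def[symmetric] D_def[symmetric] by (simp add: field_simps power2_eq_square)
  also have "D - 2 * x * \<beta> + N = (x - \<beta>)\<^sup>2 + y\<^sup>2 - s\<^sup>2"
    by (simp add: N_def D_def power2_eq_square algebra_simps)
  finally show ?thesis
    by (simp add: N_def D_def)
qed

lemma power_inversion_image_circle:
  fixes a b \<rho> s :: real
  assumes z: "z \<noteq> of_real a" and D: "(b - a)\<^sup>2 - s\<^sup>2 \<noteq> 0"
    and bs': "inversion_disk a \<rho> (b, s) = (b', s')"
  shows "(cmod (inversion (of_real a) \<rho> z - of_real b'))\<^sup>2 - s'\<^sup>2
       = \<rho> ^ 4 / ((cmod (z - of_real a))\<^sup>2 * ((b - a)\<^sup>2 - s\<^sup>2)) * ((cmod (z - of_real b))\<^sup>2 - s\<^sup>2)"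
proof -
  have N: "(Re z - a)\<^sup>2 + (Im z)\<^sup>2 \<noteq> 0"
    using z by (auto simp: complex_eq_iff)
  have "Re z - b = (Re z - a) - (b - a)" by simp
  moreover have "b' = a + \<rho>\<^sup>2 * (b - a) / ((b - a)\<^sup>2 - s\<^sup>2)" "s' = \<rho>\<^sup>2 * s / ((b - a)\<^sup>2 - s\<^sup>2)"
    using bs' by (simp_all add: inversion_disk_def)
  ultimately show ?thesis
    unfolding norm_sub_of_real_power2 Re_inversion Im_inversion
    using inversion_circle_identity[OF N D, of \<rho>] by simp
qed

lemma inversion_disk_denominator_pos:
  fixes a b s :: real
  assumes "0 \<le> s" "s < \<bar>b - a\<bar>"
  shows "0 < (b - a)\<^sup>2 - s\<^sup>2"
  using power_strict_mono[OF assms(2,1), of 2] by simp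

lemma sgn_power_inversion_image_circle:
  fixes a b \<rho> s :: real
  assumes \<rho>: "\<rho> \<noteq> 0" and s: "0 \<le> s" "s < \<bar>b - a\<bar>"
    and bs': "inversion_disk a \<rho> (b, s) = (b', s')"
  shows "sgn ((cmod (inversion (of_real a) \<rho> z - of_real b'))\<^sup>2 - s'\<^sup>2)
       = sgn ((cmod (z - of_real b))\<^sup>2 - s\<^sup>2)"
proof -
  define D where "D = (b - a)\<^sup>2 - s\<^sup>2"
  have D: "0 < D"
    unfolding D_def using s by (rule inversion_disk_denominator_pos)
  show ?thesis
  proof (cases "z = of_real a")
    case True
    have b's': "b' = a + \<rho>\<^sup>2 * (b - a) / D" "s' = \<rho>\<^sup>2 * s / D"
      using bs' by (simp_all add: inversion_disk_def D_def)
    have "(cmod (of_real a - of_real b'))\<^sup>2 = (a - b')\<^sup>2"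
      by (metis norm_of_real of_real_diff power2_abs)
    then have "(cmod (of_real a - of_real b'))\<^sup>2 - s'\<^sup>2 = (\<rho>\<^sup>2 * (b - a) / D)\<^sup>2 - (\<rho>\<^sup>2 * s / D)\<^sup>2"
      by (simp add: b's' power2_commute)
    also have "\<dots> = (\<rho>\<^sup>2)\<^sup>2 * D / D\<^sup>2"
      by (simp add: D_def power_divide power_mult_distrib flip: diff_divide_distrib right_diff_distrib)
    finally have "(cmod (of_real a - of_real b'))\<^sup>2 - s'\<^sup>2 = (\<rho>\<^sup>2)\<^sup>2 * D / D\<^sup>2" .
    moreover have "(cmod (of_real a - of_real b))\<^sup>2 - s\<^sup>2 = D"
      by (simp add: D_def norm_of_real power2_commute flip: of_real_diff)
    ultimately show ?thesis
      using True D \<rho> by simp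
  next
    case False
    let ?F = "\<rho> ^ 4 / ((cmod (z - of_real a))\<^sup>2 * ((b - a)\<^sup>2 - s\<^sup>2))"
    have F: "0 < ?F"
      using False D \<rho> by (simp add: D_def)
    have eq: "(cmod (inversion (of_real a) \<rho> z - of_real b'))\<^sup>2 - s'\<^sup>2
        = ?F * ((cmod (z - of_real b))\<^sup>2 - s\<^sup>2)"
      using power_inversion_image_circle[OF False _ bs'] D by (simp add: D_def)
    show ?thesis
      unfolding eq sgn_mult sgn_pos[OF F] by simp
  qed
qed

lemma mem_cball_iff_power:
  "0 \<le> s \<Longrightarrow> w \<in> cball b s \<longleftrightarrow> (cmod (w - b))\<^sup>2 - s\<^sup>2 \<le> 0"
  by (simp add: dist_norm norm_minus_commute abs_le_square_iff[symmetric])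

lemma mem_sphere_iff_power:
  "0 \<le> s \<Longrightarrow> w \<in> sphere b s \<longleftrightarrow> (cmod (w - b))\<^sup>2 - s\<^sup>2 = 0"
  by (simp add: dist_norm norm_minus_commute power2_eq_iff_nonneg)

lemma inversion_disk_radius_nonneg:
  assumes "0 \<le> s" "s < \<bar>b - a\<bar>" "inversion_disk a \<rho> (b, s) = (b', s')"
  shows "0 \<le> s'"
  using assms inversion_disk_denominator_pos[OF assms(1,2)] by (auto simp: inversion_disk_def)

lemma inversion_disk_radius_pos:
  assumes "\<rho> \<noteq> 0" "0 < s" "s < \<bar>b - a\<bar>" "inversion_disk a \<rho> (b, s) = (b', s')"
  shows "0 < s'"
  using assms inversion_disk_denominator_pos[of s b a] by (auto simp: inversion_disk_def)

lemma inversion_image_cball: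
  fixes a b \<rho> s :: real
  assumes \<rho>: "\<rho> \<noteq> 0" and s: "0 \<le> s" "s < \<bar>b - a\<bar>"
    and bs': "inversion_disk a \<rho> (b, s) = (b', s')"
  shows "inversion (of_real a) \<rho> ` cball (of_real b) s = cball (of_real b') s'"
proof -
  have s': "0 \<le> s'"
    using s bs' by (rule inversion_disk_radius_nonneg)
  have "inversion (of_real a) \<rho> w \<in> cball (of_real b) s \<longleftrightarrow> w \<in> cball (of_real b') s'" for w
    using sgn_power_inversion_image_circle[OF \<rho> s bs', of "inversion (of_real a) \<rho> w"]
    unfolding mem_cball_iff_power[OF s(1)] mem_cball_iff_power[OF s']
    by (metis inversion_involutive[OF \<rho>] sgn_le_0_iff)
  then show ?thesis
    by (auto simp: inversion_image_eq_vimage[OF \<rho>])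
qed

lemma inversion_image_semicircle:
  fixes a b \<rho> s :: real
  assumes \<rho>: "\<rho> \<noteq> 0" and s: "0 \<le> s" "s < \<bar>b - a\<bar>"
    and bs': "inversion_disk a \<rho> (b, s) = (b', s')"
  shows "inversion (of_real a) \<rho> ` semicircle (of_real b) s = semicircle (of_real b') s'"
proof -
  have s': "0 \<le> s'"
    using s bs' by (rule inversion_disk_radius_nonneg)
  have "inversion (of_real a) \<rho> w \<in> sphere (of_real b) s \<longleftrightarrow> w \<in> sphere (of_real b') s'" for w
    using sgn_power_inversion_image_circle[OF \<rho> s bs', of "inversion (of_real a) \<rho> w"]
    unfolding mem_sphere_iff_power[OF s(1)] mem_sphere_iff_power[OF s']
    by (metis inversion_involutive[OF \<rho>] sgn_0_0)
  then show ?thesis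
    by (auto simp: inversion_image_eq_vimage[OF \<rho>] semicircle_def upper_def Im_inversion_pos_iff[OF \<rho>])
qed

lemma norm_inversion_sub_le:
  assumes "0 < \<rho>" "\<rho> \<le> cmod (z - a)"
  shows "cmod (inversion a \<rho> z - a) \<le> \<rho>"
proof -
  have "cmod (inversion a \<rho> z - a) = \<rho>\<^sup>2 / cmod (z - a)"
    by (simp add: inversion_def norm_divide norm_power flip: complex_cnj_diff)
  also have "\<dots> \<le> \<rho>\<^sup>2 / \<rho>"
    using assms by (intro divide_left_mono mult_pos_pos) auto
  finally show ?thesis
    by (simp add: power2_eq_square)
qed

lemma isCont_inversion: "z \<noteq> a \<Longrightarrow> isCont (inversion a \<rho>) z"
  unfolding inversion_def by (intro continuous_intros isCont_cnj) auto

lemma inversion_diff: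
  assumes "z \<noteq> a" "w \<noteq> a"
  shows "inversion a \<rho> z - inversion a \<rho> w = of_real (\<rho>\<^sup>2) * cnj (w - z) / (cnj (z - a) * cnj (w - a))"
  using assms unfolding inversion_def by (simp add: field_simps)

section \<open>Independence of the base point\<close>

text \<open>hdist z w = 2 (cosh d - 1) for the hyperbolic distance d of z and w; in particular it is
  invariant under the inversions.\<close>

definition hdist :: "complex \<Rightarrow> complex \<Rightarrow> real" where
  "hdist z w = (cmod (z - w))\<^sup>2 / (Im z * Im w)"

lemma inversion_hdist:
  assumes \<rho>: "\<rho> \<noteq> 0" and z: "0 < Im z" and w: "0 < Im w"
  shows "hdist (inversion (of_real a) \<rho> z) (inversion (of_real a) \<rho> w) = hdist z w"
proof -
  have za: "z \<noteq> of_real a" "w \<noteq> of_real a"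
    using z w by auto
  from inversion_diff[OF za, of \<rho>] have norm: "cmod (inversion (of_real a) \<rho> z - inversion (of_real a) \<rho> w)
      = \<rho>\<^sup>2 * cmod (z - w) / (cmod (z - of_real a) * cmod (w - of_real a))"
    by (simp add: norm_divide norm_mult norm_power norm_minus_commute flip: complex_cnj_diff)
  show ?thesis
    unfolding hdist_def Im_inversion norm
    using za \<rho> by (simp add: field_simps power2_eq_square norm_minus_commute)
qed

lemma norm_sub_le_hdist:
  assumes y: "0 < Im y" and y': "0 < Im y'"
  shows "cmod (y' - y) \<le> (1 + hdist y y') * Im y"
proof -
  define a b d where "a = Im y" and "b = Im y'" and "d = hdist y y'"
  have a: "0 < a" and b: "0 < b" and d: "0 \<le> d"
    using y y' by (simp_all add: a_def b_def d_def hdist_def)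
  have sq: "(cmod (y' - y))\<^sup>2 = d * a * b"
    using a b by (simp add: a_def b_def d_def hdist_def norm_minus_commute)
  have "(b - a)\<^sup>2 \<le> (cmod (y' - y))\<^sup>2"
    using abs_Im_le_cmod[of "y' - y"] by (simp add: a_def b_def abs_le_square_iff[symmetric])
  then have "b * b \<le> ((2 + d) * a) * b"
    using sq by (simp add: power2_eq_square algebra_simps) (use zero_le_square[of a] in linarith)
  then have "b \<le> (2 + d) * a"
    using b by (rule mult_right_le_imp_le)
  then have "d * a * b \<le> d * a * ((2 + d) * a)"
    using a d by (intro mult_left_mono) auto
  also have "\<dots> \<le> ((1 + d) * a)\<^sup>2"
    by (simp add: power2_eq_square algebra_simps)
  finally have "(cmod (y' - y))\<^sup>2 \<le> ((1 + d) * a)\<^sup>2"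
    using sq by simp
  then have "cmod (y' - y) \<le> (1 + d) * a"
    by (rule power2_le_imp_le) (use a d in simp)
  then show ?thesis
    by (simp only: a_def d_def)
qed

lemma norm_sub_of_real_le_hdist:
  assumes "0 < Im y" "0 < Im y'"
  shows "cmod (y' - of_real x) \<le> (2 + hdist y y') * cmod (y - of_real x)"
proof -
  have Im_le: "Im y \<le> cmod (y - of_real x)"
    using abs_Im_le_cmod[of "y - of_real x"] by simp
  have "0 \<le> hdist y y'"
    using assms by (simp add: hdist_def)
  then have mono: "(1 + hdist y y') * Im y \<le> (1 + hdist y y') * cmod (y - of_real x)"
    using Im_le by (intro mult_left_mono) auto
  have "cmod (y' - of_real x) \<le> cmod (y' - y) + cmod (y - of_real x)"
    using norm_triangle_ineq[of "y' - y" "y - of_real x"] by simp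
  also have "\<dots> \<le> (1 + hdist y y') * cmod (y - of_real x) + cmod (y - of_real x)"
    using norm_sub_le_hdist[OF assms] mono by linarith
  finally show ?thesis
    by (simp add: algebra_simps)
qed

lemma limit_set_base_point_subset:
  assumes upper: "\<And>g z. g \<in> G \<Longrightarrow> 0 < Im z \<Longrightarrow> 0 < Im (g z)"
    and isometric: "\<And>g z w. g \<in> G \<Longrightarrow> 0 < Im z \<Longrightarrow> 0 < Im w \<Longrightarrow> hdist (g z) (g w) = hdist z w"
    and z0: "0 < Im z0" and z1: "0 < Im z1"
  shows "limit_set G z0 \<subseteq> limit_set G z1"
proof
  fix x
  assume "x \<in> limit_set G z0"
  then have lim: "of_real x islimpt (\<lambda>g. g z0) ` G"
    by (simp add: limit_set_def)
  define d where "d = hdist z0 z1"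
  have d: "0 \<le> d"
    using z0 z1 by (simp add: d_def hdist_def)
  have "\<exists>y\<in>(\<lambda>g. g z1) ` G. y \<noteq> of_real x \<and> dist y (of_real x) < e" if e: "0 < e" for e
  proof -
    obtain g where g: "g \<in> G" "dist (g z0) (of_real x) < e / (2 + d)"
      using lim[unfolded islimpt_approachable, rule_format, of "e / (2 + d)"] e d by auto
    have "dist (g z1) (of_real x) \<le> (2 + d) * dist (g z0) (of_real x)"
      using norm_sub_of_real_le_hdist[OF upper[OF g(1) z0] upper[OF g(1) z1]]
      by (simp add: dist_norm d_def isometric[OF g(1) z0 z1])
    also have "\<dots> < e"
      using g(2) d by (simp add: field_simps)
    finally have "dist (g z1) (of_real x) < e" .
    moreover have "g z1 \<noteq> of_real x"
      using upper[OF g(1) z1] by auto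
    ultimately show ?thesis
      using g(1) by blast
  qed
  then show "x \<in> limit_set G z1"
    by (simp add: limit_set_def islimpt_approachable)
qed

section \<open>Closures and Hausdorff measure\<close>

lemma closure_UN_finite: "finite F \<Longrightarrow> closure (\<Union>i\<in>F. A i) = (\<Union>i\<in>F. closure (A i))"
  by (induction F rule: finite_induct) (simp_all add: closure_Un)

lemma isCont_closure_image:
  fixes f :: "'a::{first_countable_topology, t2_space} \<Rightarrow> 'b::first_countable_topology"
  assumes "x \<in> closure A" "isCont f x"
  shows "f x \<in> closure (f ` A)"
proof -
  from assms(1)[unfolded closure_sequential] obtain \<sigma> where "\<forall>n. \<sigma> n \<in> A" "\<sigma> \<longlonglongrightarrow> x"
    by blast
  then show ?thesis
    unfolding closure_sequential using isCont_tendsto_compose[OF assms(2)]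
    by (intro exI[of _ "f \<circ> \<sigma>"]) (auto simp: comp_def)
qed

lemma closure_image_involution:
  fixes f :: "'a::{first_countable_topology, t2_space} \<Rightarrow> 'a"
  assumes "\<And>y. f (f y) = y" "isCont f (f x)" "f x \<in> closure (f ` A)"
  shows "x \<in> closure A"
  using isCont_closure_image[OF assms(3,2)] assms(1) by (simp add: image_image)

lemma closure_Un_far:
  assumes "x \<in> closure (A \<union> C)" "C \<inter> ball x e = {}" "0 < e"
  shows "x \<in> closure A"
proof -
  have "x \<notin> closure C"
    using assms(2,3) open_Int_closure_eq_empty[of "ball x e" C] by (auto simp: Int_commute)
  then show ?thesis
    using assms(1) closure_Un by blast
qed

lemma infsum_cmult_right_le_ennreal:
  fixes f :: "'a \<Rightarrow> ennreal"
  shows "(\<Sum>\<^sub>\<infinity>u\<in>A. C * f u) \<le> C * (\<Sum>\<^sub>\<infinity>u\<in>A. f u)"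
proof (rule infsum_le_finite_sums[OF nonneg_summable_on_complete])
  fix F
  assume F: "finite F" "F \<subseteq> A"
  then have "infsum f F \<le> infsum f A"
    by (intro infsum_mono_neutral[OF nonneg_summable_on_complete nonneg_summable_on_complete]) auto
  then have "sum f F \<le> infsum f A"
    using F by simp
  then show "(\<Sum>u\<in>F. C * f u) \<le> C * (\<Sum>\<^sub>\<infinity>u\<in>A. f u)"
    by (simp add: mult_left_mono flip: sum_distrib_left)
qed simp

lemma finite_ge_if_infsum_powr_finite:
  fixes f :: "'a \<Rightarrow> real"
  assumes \<alpha>: "0 < \<alpha>" and \<eta>: "0 < \<eta>" and fin: "(\<Sum>\<^sub>\<infinity>i\<in>A. ennreal (f i powr \<alpha>)) < \<infinity>"
  shows "finite {i\<in>A. \<eta> \<le> f i}"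
proof (rule ccontr)
  assume inf: "infinite {i\<in>A. \<eta> \<le> f i}"
  have "ennreal (\<eta> powr \<alpha>) \<le> ennreal (f i powr \<alpha>)" if "i \<in> {i\<in>A. \<eta> \<le> f i}" for i
    using that \<eta> \<alpha> by (intro ennreal_leI powr_mono2) auto
  moreover have "0 < ennreal (\<eta> powr \<alpha>)"
    using \<eta> by simp
  ultimately have "(\<Sum>\<^sub>\<infinity>i\<in>{i\<in>A. \<eta> \<le> f i}. ennreal (f i powr \<alpha>)) = \<infinity>"
    using inf by (rule infsum_superconst_infinite_ennreal)
  moreover have "(\<Sum>\<^sub>\<infinity>i\<in>{i\<in>A. \<eta> \<le> f i}. ennreal (f i powr \<alpha>)) \<le> (\<Sum>\<^sub>\<infinity>i\<in>A. ennreal (f i powr \<alpha>))"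
    by (rule infsum_mono_neutral[OF nonneg_summable_on_complete nonneg_summable_on_complete]) auto
  ultimately show False
    using fin by simp
qed

lemma suminf_eq_infsum_ennreal:
  fixes f :: "nat \<Rightarrow> ennreal"
  shows "(\<Sum>j. f j) = (\<Sum>\<^sub>\<infinity>j. f j)"
  using has_sum_imp_sums[OF has_sum_infsum[OF nonneg_summable_on_complete]] sums_unique
  by (metis zero_le)

lemma suminf_even_to_nat_eq_infsum:
  fixes g :: "'a::countable \<Rightarrow> ennreal"
  shows "(\<Sum>j. if even j \<and> j div 2 \<in> to_nat ` W then g (from_nat (j div 2)) else 0) = (\<Sum>\<^sub>\<infinity>u\<in>W. g u)"
    (is "(\<Sum>j. ?f j) = _")
proof -
  define h where "h u = 2 * to_nat u" for u :: 'a
  have "(\<Sum>j. ?f j) = (\<Sum>\<^sub>\<infinity>j\<in>h ` W. ?f j)"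
    unfolding suminf_eq_infsum_ennreal by (rule infsum_cong_neutral) (auto simp: h_def)
  also have "\<dots> = (\<Sum>\<^sub>\<infinity>u\<in>W. ?f (h u))"
    by (subst infsum_reindex) (auto simp: h_def inj_on_def comp_def)
  also have "\<dots> = (\<Sum>\<^sub>\<infinity>u\<in>W. g u)"
    by (rule infsum_cong) (simp add: h_def)
  finally show ?thesis .
qed

text \<open>The points p v cost nothing: diameter {x} = 0 and 0 powr s = 0, even for s = 0.\<close>

lemma hausdorff_pre_le_infsum:
  fixes I :: "'a::countable \<Rightarrow> real set" and p :: "'b::countable \<Rightarrow> real"
  assumes cover: "A \<subseteq> (\<Union>u\<in>W. I u) \<union> range p"
    and small: "\<And>u. u \<in> W \<Longrightarrow> bounded (I u) \<and> diameter (I u) \<le> \<delta>" and \<delta>: "0 \<le> \<delta>"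
  shows "hausdorff_pre s \<delta> A \<le> (\<Sum>\<^sub>\<infinity>u\<in>W. ennreal (diameter (I u) powr s))"
proof -
  define U where "U j = (if even j then (if j div 2 \<in> to_nat ` W then I (from_nat (j div 2)) else {})
                         else {p (from_nat (j div 2))})" for j
  have "A \<subseteq> (\<Union>j. U j)"
  proof
    fix x
    assume "x \<in> A"
    then consider u where "u \<in> W" "x \<in> I u" | v where "x = p v"
      using cover by blast
    then show "x \<in> (\<Union>j. U j)"
    proof cases
      case (1 u)
      then have "x \<in> U (2 * to_nat u)"
        by (simp add: U_def)
      then show ?thesis
        by blast
    next
      case (2 v)
      then have "x \<in> U (2 * to_nat v + 1)"
        by (simp add: U_def)
      then show ?thesis
        by blast
    qed
  qed
  moreover have "bounded (U j) \<and> diameter (U j) \<le> \<delta>" for j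
    using small \<delta> by (auto simp: U_def)
  ultimately have "hausdorff_pre s \<delta> A \<le> (\<Sum>j. ennreal (diameter (U j) powr s))"
    unfolding hausdorff_pre_def by (intro INF_lower) auto
  also have "\<dots> = (\<Sum>j. if even j \<and> j div 2 \<in> to_nat ` W
                        then ennreal (diameter (I (from_nat (j div 2))) powr s) else 0)"
    by (intro suminf_cong) (simp add: U_def)
  also have "\<dots> = (\<Sum>\<^sub>\<infinity>u\<in>W. ennreal (diameter (I u) powr s))"
    by (rule suminf_even_to_nat_eq_infsum)
  finally show ?thesis .
qed

lemma hausdorff_pre_mono: "A \<subseteq> B \<Longrightarrow> hausdorff_pre s \<delta> A \<le> hausdorff_pre s \<delta> B"
  unfolding hausdorff_pre_def by (rule INF_superset_mono) auto

lemma hausdorff_measure_mono: "A \<subseteq> B \<Longrightarrow> hausdorff_measure s A \<le> hausdorff_measure s B"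
  unfolding hausdorff_measure_def by (intro SUP_mono) (auto intro: hausdorff_pre_mono)

lemma exists_powr_le:
  fixes e p \<delta> :: real
  assumes "0 < e" "0 < p" "0 < \<delta>"
  shows "\<exists>\<tau>. 0 < \<tau> \<and> \<tau> \<le> \<delta> \<and> \<tau> powr p \<le> e"
proof (intro exI conjI)
  let ?\<tau> = "min \<delta> (e powr (1 / p))"
  show "0 < ?\<tau>" "?\<tau> \<le> \<delta>"
    using assms by auto
  have "?\<tau> powr p \<le> (e powr (1 / p)) powr p"
    using assms by (intro powr_mono2) auto
  also have "\<dots> = e"
    using assms by (simp add: powr_powr)
  finally show "?\<tau> powr p \<le> e" .
qed

lemma hausdorff_dim_le:
  assumes "0 \<le> \<alpha>" and null: "\<And>s. \<alpha> < s \<Longrightarrow> hausdorff_measure s A = 0"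
  shows "hausdorff_dim A \<le> \<alpha>"
  unfolding hausdorff_dim_def
proof (rule field_le_epsilon)
  fix e :: real
  assume "0 < e"
  then have "\<alpha> + e \<in> {s. 0 \<le> s \<and> hausdorff_measure s A = 0}"
    using assms by simp
  then show "Inf {s. 0 \<le> s \<and> hausdorff_measure s A = 0} \<le> \<alpha> + e"
    by (rule cInf_lower) (auto intro: bdd_belowI[of _ 0])
qed

section \<open>Disjoint disks and reduced words\<close>

lemma word_map_Nil [simp]: "word_map c r [] = id"
  by (simp add: word_map_def)

lemma word_map_Cons [simp]: "word_map c r (i # w) = gen_map c r i \<circ> word_map c r w"
  by (simp add: word_map_def)

lemma word_map_append: "word_map c r (u @ v) = word_map c r u \<circ> word_map c r v"
  by (induction u) auto

lemma semicircle_radius_unique: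
  assumes "0 < \<rho>" "0 < \<rho>'" "semicircle (of_real a) \<rho> = semicircle (of_real a') \<rho>'"
  shows "\<rho> = \<rho>'"
proof -
  have le: "\<rho> \<le> \<rho>'"
    if "0 < \<rho>" "semicircle (of_real a) \<rho> = semicircle (of_real a') \<rho>'" for a a' \<rho> \<rho>'
  proof -
    let ?top = "of_real a + \<i> * of_real \<rho>"
    have "?top \<in> semicircle (of_real a) \<rho>"
      using that(1) by (simp add: semicircle_def upper_def dist_norm norm_mult)
    then have "?top \<in> sphere (of_real a') \<rho>'"
      using that(2) unfolding semicircle_def by blast
    then show ?thesis
      using abs_Im_le_cmod[of "of_real a' - ?top"] that(1) by (simp add: dist_norm)
  qed
  show ?thesis
    using le[OF assms(1,3)] le[OF assms(2) assms(3)[symmetric]] by simp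
qed

locale disjoint_disks =
  fixes c :: "nat \<Rightarrow> int" and r :: "nat \<Rightarrow> real" and k :: nat
  assumes radius_pos: "\<forall>i\<ge>1. 0 < r i"
    and disks_disjoint: "\<forall>i\<ge>1. \<forall>j\<ge>1. i \<noteq> j \<longrightarrow>
               cball (of_int (c i) :: complex) (r i) \<inter> cball (of_int (c j)) (r j) = {}"
begin

abbreviation cc :: "nat \<Rightarrow> real" where
  "cc i \<equiv> real_of_int (c i)"

definition disk :: "nat \<Rightarrow> complex set" where
  "disk i = cball (of_real (cc i)) (r i)"

lemma r_pos: "1 \<le> i \<Longrightarrow> 0 < r i"
  using radius_pos by simp

lemma disk_disjoint: "1 \<le> i \<Longrightarrow> 1 \<le> j \<Longrightarrow> i \<noteq> j \<Longrightarrow> disk i \<inter> disk j = {}"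
  using disks_disjoint by (simp add: disk_def)

lemma norm_sub_centre_ge_if_mem_disk:
  assumes "y \<in> disk j" "1 \<le> i" "1 \<le> j" "i \<noteq> j"
  shows "r i \<le> cmod (y - of_real (cc i))"
proof -
  have "y \<notin> ball (of_real (cc i)) (r i)"
    using assms disk_disjoint[of i j] ball_subset_cball unfolding disk_def by blast
  then show ?thesis
    by (simp add: dist_norm norm_minus_commute)
qed

lemma gen_map_eq: "gen_map c r i = inversion (of_real (cc i)) (r i)"
  by (simp add: gen_map_def)

lemma gen_map_involutive: "1 \<le> i \<Longrightarrow> gen_map c r i (gen_map c r i z) = z"
  using inversion_involutive r_pos by (simp add: gen_map_eq less_imp_neq[symmetric])

lemma gen_map_mem_disk:
  assumes "1 \<le> i" "r i \<le> cmod (y - of_real (cc i))"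
  shows "gen_map c r i y \<in> disk i"
  using norm_inversion_sub_le[OF r_pos assms(2)] assms(1)
  by (simp add: gen_map_eq disk_def dist_norm norm_minus_commute)

lemma dist_centres_gt:
  assumes "1 \<le> i" "1 \<le> j" "i \<noteq> j"
  shows "r i + r j < \<bar>cc i - cc j\<bar>"
proof (rule ccontr)
  assume "\<not> ?thesis"
  then have le: "\<bar>cc i - cc j\<bar> \<le> r i + r j"
    by simp
  have ri: "0 < r i" and rj: "0 < r j"
    using r_pos assms by auto
  define t where "t = r i / (r i + r j)"
  have t: "0 \<le> t" "t \<le> 1"
    using ri rj by (auto simp: t_def)
  define z where "z = cc i + t * (cc j - cc i)"
  have "z - cc i = t * (cc j - cc i)" "z - cc j = (1 - t) * (cc i - cc j)"
    by (simp_all add: z_def algebra_simps)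
  then have "\<bar>z - cc i\<bar> = t * \<bar>cc i - cc j\<bar>" "\<bar>z - cc j\<bar> = (1 - t) * \<bar>cc i - cc j\<bar>"
    using t by (simp_all add: abs_mult abs_minus_commute)
  moreover have "t * (r i + r j) = r i" "(1 - t) * (r i + r j) = r j"
    using ri rj by (simp_all add: t_def field_simps)
  ultimately have "\<bar>z - cc i\<bar> \<le> r i" "\<bar>z - cc j\<bar> \<le> r j"
    using le t by (metis mult_left_mono diff_ge_0_iff_ge)+
  then have "of_real z \<in> disk i \<inter> disk j"
    unfolding disk_def Int_iff mem_cball dist_of_real dist_real_def by (simp add: abs_minus_commute)
  then show False
    using disk_disjoint assms by blast
qed

lemma inj_on_c: "inj_on c {i. 1 \<le> i}"
proof (rule inj_onI)
  fix i j
  assume "i \<in> {i. 1 \<le> i}" "j \<in> {i. 1 \<le> i}" "c i = c j"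
  then show "i = j"
    using dist_centres_gt[of i j] r_pos[of i] r_pos[of j] by fastforce
qed

lemma finite_centres_near: "finite {i. 1 \<le> i \<and> \<bar>cc i - x\<bar> \<le> T}"
proof (rule finite_subset)
  show "{i. 1 \<le> i \<and> \<bar>cc i - x\<bar> \<le> T} \<subseteq> {i \<in> {i. 1 \<le> i}. c i \<in> {\<lfloor>x - T\<rfloor>..\<lceil>x + T\<rceil>}}"
    by (auto simp: abs_le_iff floor_le_iff le_ceiling_iff)
  show "finite {i \<in> {i. 1 \<le> i}. c i \<in> {\<lfloor>x - T\<rfloor>..\<lceil>x + T\<rceil>}}"
    by (rule finite_inverse_image_gen[OF _ inj_on_c]) simp
qed

abbreviation Gamma :: "(complex \<Rightarrow> complex) set" where
  "Gamma \<equiv> gen_by {gen_map c r i | i. k < i}"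

definition reduced :: "nat list \<Rightarrow> bool" where
  "reduced w \<longleftrightarrow> (\<forall>m\<in>set w. k < m) \<and> successively (\<noteq>) w"

lemma reduced_words_eq: "reduced_words k n = {w. length w = n \<and> reduced w}"
  by (auto simp: reduced_words_def reduced_def successively_conv_nth)

lemma reduced_ConsD: "reduced (i # w) \<Longrightarrow> reduced w"
  by (auto simp: reduced_def successively_Cons)

lemma reduced_Cons_Cons: "reduced (i # j # w) \<longleftrightarrow> k < i \<and> i \<noteq> j \<and> reduced (j # w)"
  by (auto simp: reduced_def)

lemma reduced_appendD: "reduced (u @ v) \<Longrightarrow> reduced u \<and> reduced v"
  by (auto simp: reduced_def successively_append_iff)

lemma reduced_append_last_hd: "reduced (u @ v) \<Longrightarrow> u \<noteq> [] \<Longrightarrow> v \<noteq> [] \<Longrightarrow> last u \<noteq> hd v"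
  by (auto simp: reduced_def successively_append_iff)

lemma reduced_letter_ge_1: "reduced w \<Longrightarrow> m \<in> set w \<Longrightarrow> 1 \<le> m"
  by (auto simp: reduced_def)

fun disk_params :: "nat list \<Rightarrow> real \<times> real" where
  "disk_params [] = (0, 0)"
| "disk_params [i] = (cc i, r i)"
| "disk_params (i # j # u) = inversion_disk (cc i) (r i) (disk_params (j # u))"

abbreviation centre :: "nat list \<Rightarrow> real" where
  "centre u \<equiv> fst (disk_params u)"

abbreviation rad :: "nat list \<Rightarrow> real" where
  "rad u \<equiv> snd (disk_params u)"

definition word_disk :: "nat list \<Rightarrow> complex set" where
  "word_disk u = word_map c r (butlast u) ` disk (last u)"

lemma word_disk_single: "word_disk [i] = disk i"
  by (simp add: word_disk_def)

lemma word_disk_Cons: "u \<noteq> [] \<Longrightarrow> word_disk (i # u) = gen_map c r i ` word_disk u"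
  by (simp add: word_disk_def image_comp)

lemma word_semicircle_Cons:
  "u \<noteq> [] \<Longrightarrow> word_semicircle c r (i # u) = gen_map c r i ` word_semicircle c r u"
  by (simp add: word_semicircle_def image_comp)

lemma gap_add_radius_le_dist:
  assumes sub: "cball (of_real b) s \<subseteq> disk j" and s: "0 < s" and ij: "1 \<le> i" "1 \<le> j" "i \<noteq> j"
  shows "\<bar>cc i - cc j\<bar> - r j + s \<le> \<bar>b - cc i\<bar>"
proof -
  have "dist (of_real b) (of_real (cc j) :: complex) + s \<le> r j"
    using sub s unfolding disk_def by (simp only: cball_subset_cball_iff) simp
  then have "\<bar>b - cc j\<bar> + s \<le> r j"
    unfolding dist_of_real dist_real_def .
  then show ?thesis
    by simp
qed

lemma gen_map_image_subset_disk:
  assumes "A \<subseteq> disk j" "1 \<le> i" "1 \<le> j" "i \<noteq> j"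
  shows "gen_map c r i ` A \<subseteq> disk i"
  using assms norm_sub_centre_ge_if_mem_disk gen_map_mem_disk by blast

lemma word_disk_structure:
  assumes "reduced u" "u \<noteq> []"
  shows "word_disk u = cball (of_real (centre u)) (rad u)
       \<and> word_semicircle c r u = semicircle (of_real (centre u)) (rad u)
       \<and> 0 < rad u \<and> word_disk u \<subseteq> disk (hd u)"
  using assms
proof (induction u rule: disk_params.induct)
  case (2 i)
  then show ?case
    using r_pos[of i] by (simp add: word_disk_single word_semicircle_def disk_def reduced_def)
next
  case (3 i j u)
  have red: "reduced (j # u)" and ij: "i \<noteq> j" and i: "1 \<le> i" and j: "1 \<le> j"
    using "3.prems" by (auto simp: reduced_Cons_Cons reduced_def)
  obtain b s where bs: "disk_params (j # u) = (b, s)"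
    by fastforce
  obtain b' s' where bs': "inversion_disk (cc i) (r i) (b, s) = (b', s')"
    by fastforce
  have D: "word_disk (j # u) = cball (of_real b) s"
    and S: "word_semicircle c r (j # u) = semicircle (of_real b) s"
    and s: "0 < s" and sub: "word_disk (j # u) \<subseteq> disk j"
    using "3.IH"[OF red] bs by auto
  have "r i < \<bar>cc i - cc j\<bar> - r j"
    using dist_centres_gt[OF i j ij] by simp
  then have sb: "s < \<bar>b - cc i\<bar>"
    using gap_add_radius_le_dist[OF sub[unfolded D] s i j ij] r_pos[OF i] by linarith
  have ri: "r i \<noteq> 0"
    using r_pos[OF i] by simp
  have "word_disk (i # j # u) \<subseteq> disk i"
    using gen_map_image_subset_disk[OF sub i j ij] word_disk_Cons[of "j # u" i] by simp
  moreover have "disk_params (i # j # u) = (b', s')"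
    using bs bs' by simp
  moreover have "word_disk (i # j # u) = cball (of_real b') s'"
    using word_disk_Cons[of "j # u" i] inversion_image_cball[OF ri less_imp_le[OF s] sb bs']
    by (simp only: D gen_map_eq list.simps not_False_eq_True)
  moreover have "word_semicircle c r (i # j # u) = semicircle (of_real b') s'"
    using word_semicircle_Cons[of "j # u" i] inversion_image_semicircle[OF ri less_imp_le[OF s] sb bs']
    by (simp only: S gen_map_eq list.simps not_False_eq_True)
  ultimately show ?case
    using inversion_disk_radius_pos[OF ri s sb bs'] by simp
qed simp

lemma word_disk_eq_cball: "reduced u \<Longrightarrow> u \<noteq> [] \<Longrightarrow> word_disk u = cball (of_real (centre u)) (rad u)"
  using word_disk_structure by blast

lemma rad_pos: "reduced u \<Longrightarrow> u \<noteq> [] \<Longrightarrow> 0 < rad u"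
  using word_disk_structure by blast

lemma word_disk_subset_disk: "reduced u \<Longrightarrow> u \<noteq> [] \<Longrightarrow> word_disk u \<subseteq> disk (hd u)"
  using word_disk_structure by blast

lemma word_radius_eq_rad:
  assumes "reduced u" "u \<noteq> []"
  shows "word_radius c r u = rad u"
  unfolding word_radius_def
proof (rule the_equality)
  show "0 < rad u \<and> (\<exists>a. word_semicircle c r u = semicircle (of_real a) (rad u))"
    using word_disk_structure[OF assms] by blast
next
  fix \<rho>
  assume "0 < \<rho> \<and> (\<exists>a. word_semicircle c r u = semicircle (of_real a) \<rho>)"
  then show "\<rho> = rad u"
    using word_disk_structure[OF assms] semicircle_radius_unique[of \<rho> "rad u"] by auto
qed

definition contraction :: "nat \<Rightarrow> nat \<Rightarrow> real" where
  "contraction i j = r i / (\<bar>cc i - cc j\<bar> - r j)"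

lemma contraction_bounds:
  assumes "1 \<le> i" "1 \<le> j" "i \<noteq> j"
  shows "0 \<le> contraction i j" "contraction i j < 1"
  using dist_centres_gt[OF assms] r_pos[OF assms(1)] by (simp_all add: contraction_def)

lemma rad_Cons_Cons_le:
  assumes "reduced (i # j # u)"
  shows "rad (i # j # u) \<le> (contraction i j)\<^sup>2 * rad (j # u)"
proof -
  have red: "reduced (j # u)" and ij: "i \<noteq> j" and i: "1 \<le> i" and j: "1 \<le> j"
    using assms by (auto simp: reduced_Cons_Cons reduced_def)
  obtain b s where bs: "disk_params (j # u) = (b, s)"
    by fastforce
  have s: "0 < s"
    using rad_pos[OF red] bs by simp
  have "cball (of_real b) s \<subseteq> disk j"
    using word_disk_eq_cball[OF red] word_disk_subset_disk[OF red] bs by simp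
  define g where "g = \<bar>cc i - cc j\<bar> - r j"
  have g: "0 < g"
    using dist_centres_gt[OF i j ij] r_pos[OF i] by (simp add: g_def)
  have "g + s \<le> \<bar>b - cc i\<bar>"
    using gap_add_radius_le_dist[OF \<open>cball (of_real b) s \<subseteq> disk j\<close> s i j ij] by (simp add: g_def)
  then have "g * g \<le> (\<bar>b - cc i\<bar> - s) * (\<bar>b - cc i\<bar> + s)"
    using g s by (intro mult_mono) auto
  then have D: "g\<^sup>2 \<le> (b - cc i)\<^sup>2 - s\<^sup>2"
    by (simp add: power2_eq_square algebra_simps)
  moreover have "0 < g\<^sup>2"
    using g by simp
  moreover from calculation have "0 < (b - cc i)\<^sup>2 - s\<^sup>2"
    by linarith
  ultimately have "(r i)\<^sup>2 * s / ((b - cc i)\<^sup>2 - s\<^sup>2) \<le> (r i)\<^sup>2 * s / g\<^sup>2"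
    using s by (intro divide_left_mono mult_pos_pos) auto
  then show ?thesis
    using bs by (simp add: inversion_disk_def contraction_def g_def power_divide)
qed

lemma gen_by_reduced_word: "g \<in> Gamma \<Longrightarrow> \<exists>w. reduced w \<and> g = word_map c r w"
proof (induction rule: gen_by.induct)
  case gen_id
  show ?case
    by (rule exI[of _ "[]"]) (simp add: reduced_def)
next
  case (gen_step g h)
  obtain w where w: "reduced w" "g = word_map c r w"
    using gen_step.IH by blast
  obtain i where i: "k < i" "h = gen_map c r i"
    using gen_step.hyps(2) by blast
  show ?case
  proof (cases w)
    case Nil
    then show ?thesis
      using w i by (intro exI[of _ "[i]"]) (simp add: reduced_def)
  next
    case (Cons j w')
    show ?thesis
    proof (cases "j = i")
      case True
      then have "h \<circ> g = word_map c r w'"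
        using w i Cons gen_map_involutive[of i] by (simp add: fun_eq_iff)
      then show ?thesis
        using reduced_ConsD w Cons by blast
    next
      case False
      then have "reduced (i # w)"
        using w i Cons reduced_Cons_Cons by simp
      then show ?thesis
        using w i by (intro exI[of _ "i # w"]) simp
    qed
  qed
qed

lemma Im_gen_map_pos_iff: "1 \<le> i \<Longrightarrow> 0 < Im (gen_map c r i z) \<longleftrightarrow> 0 < Im z"
  unfolding gen_map_eq using r_pos by (intro Im_inversion_pos_iff) (simp add: less_imp_neq[symmetric])

lemma gen_map_hdist:
  "1 \<le> i \<Longrightarrow> 0 < Im z \<Longrightarrow> 0 < Im w \<Longrightarrow> hdist (gen_map c r i z) (gen_map c r i w) = hdist z w"
  unfolding gen_map_eq using r_pos by (intro inversion_hdist) (simp_all add: less_imp_neq[symmetric])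

lemma Im_word_map_pos:
  "(\<forall>m\<in>set w. k < m) \<Longrightarrow> 0 < Im z \<Longrightarrow> 0 < Im (word_map c r w z)"
  by (induction w) (simp_all add: Im_gen_map_pos_iff)

lemma word_map_hdist:
  "(\<forall>m\<in>set w. k < m) \<Longrightarrow> 0 < Im z \<Longrightarrow> 0 < Im y \<Longrightarrow>
     hdist (word_map c r w z) (word_map c r w y) = hdist z y"
  by (induction w) (simp_all add: gen_map_hdist Im_word_map_pos)

definition outside_disks :: "complex \<Rightarrow> bool" where
  "outside_disks z \<longleftrightarrow> (\<forall>i>k. r i \<le> cmod (z - of_real (cc i)))"

lemma word_map_mem_word_disk:
  assumes "u \<noteq> []" "k < last u" "r (last u) \<le> cmod (y - of_real (cc (last u)))"
  shows "word_map c r u y \<in> word_disk u"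
proof -
  have "u = butlast u @ [last u]"
    using assms(1) by simp
  then have "word_map c r u y = word_map c r (butlast u) (gen_map c r (last u) y)"
    by (metis word_map_append word_map_Cons word_map_Nil comp_apply id_apply)
  moreover have "gen_map c r (last u) y \<in> disk (last u)"
    using assms(2,3) by (intro gen_map_mem_disk) auto
  ultimately show ?thesis
    by (simp add: word_disk_def)
qed

lemma word_map_mem_word_disk_take:
  assumes z: "outside_disks z" and w: "reduced w" and n: "1 \<le> n" "n \<le> length w"
  shows "word_map c r w z \<in> word_disk (take n w)"
proof -
  define u v where "u = take n w" and "v = drop n w"
  have uv: "w = u @ v" and u: "u \<noteq> []"
    using n by (auto simp: u_def v_def)
  have uv_red: "reduced (u @ v)"
    using w uv by simp
  then have red: "reduced u" "reduced v"
    by (auto dest: reduced_appendD)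
  have ku: "k < last u"
    using red(1) u by (simp add: reduced_def)
  have "r (last u) \<le> cmod (word_map c r v z - of_real (cc (last u)))"
  proof (cases "v = []")
    case True
    then show ?thesis
      using z ku by (simp add: outside_disks_def)
  next
    case False
    have kv: "k < last v" "k < hd v"
      using red(2) False by (auto simp: reduced_def)
    then have "word_map c r v z \<in> word_disk v"
      using z False by (intro word_map_mem_word_disk) (auto simp: outside_disks_def)
    then have "word_map c r v z \<in> disk (hd v)"
      using word_disk_subset_disk[OF red(2) False] by blast
    moreover have "last u \<noteq> hd v"
      using reduced_append_last_hd[OF uv_red u False] .
    ultimately show ?thesis
      using ku kv by (intro norm_sub_centre_ge_if_mem_disk) auto
  qed
  then have "word_map c r u (word_map c r v z) \<in> word_disk u"
    by (rule word_map_mem_word_disk[OF u ku])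
  moreover have "word_map c r w z = word_map c r u (word_map c r v z)"
    by (subst uv) (simp add: word_map_append)
  ultimately show ?thesis
    by (simp add: u_def)
qed

text \<open>The inversion maps its centre to itself rather than to \<infinity>, so gen_map c r i is
  continuous except at cc i. The images of the centres under all words form the countable set
  where closures may fail to commute with the generators.\<close>

definition centre_image :: "nat list \<times> nat \<Rightarrow> complex" where
  "centre_image vj = word_map c r (fst vj) (of_real (cc (snd vj)))"

lemma limit_set_Gamma_base_point:
  assumes "0 < Im z0" "0 < Im z1"
  shows "limit_set Gamma z0 \<subseteq> limit_set Gamma z1"
proof (rule limit_set_base_point_subset[OF _ _ assms])
  fix g z w
  assume "g \<in> Gamma"
  then obtain u where u: "reduced u" "g = word_map c r u"
    using gen_by_reduced_word by blast
  then have letters: "\<forall>m\<in>set u. k < m"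
    by (simp add: reduced_def)
  show "0 < Im z \<Longrightarrow> 0 < Im (g z)"
    using Im_word_map_pos[OF letters] u(2) by simp
  show "0 < Im z \<Longrightarrow> 0 < Im w \<Longrightarrow> hdist (g z) (g w) = hdist z w"
    using word_map_hdist[OF letters] u(2) by simp
qed

end

section \<open>Summable radii\<close>

locale summable_disks = disjoint_disks +
  fixes \<alpha> :: real
  assumes alpha_pos: "0 < \<alpha>"
    and summable_radii: "(\<Sum>\<^sub>\<infinity>i\<in>{k<..}. ennreal (r i powr \<alpha>)) < \<infinity>"
begin

lemma finite_large_radii: "0 < \<eta> \<Longrightarrow> finite {i. k < i \<and> \<eta> \<le> r i}"
  using finite_ge_if_infsum_powr_finite[OF alpha_pos _ summable_radii] by simp

definition rmax :: real where
  "rmax = Max (insert 1 (r ` {i. k < i \<and> 1 \<le> r i}))"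

lemma rmax_ge_1: "1 \<le> rmax"
  using finite_large_radii[of 1] by (simp add: rmax_def)

lemma r_le_rmax:
  assumes "k < i"
  shows "r i \<le> rmax"
proof (cases "1 \<le> r i")
  case True
  then show ?thesis
    using assms finite_large_radii[of 1] by (auto simp: rmax_def intro!: Max_ge)
next
  case False
  then show ?thesis
    using rmax_ge_1 by linarith
qed

lemma outside_disks_high_point: "outside_disks (\<i> * of_real (rmax + 1))"
  unfolding outside_disks_def
proof (intro allI impI)
  fix i
  assume "k < i"
  have "r i \<le> \<bar>Im (\<i> * of_real (rmax + 1) - of_real (cc i))\<bar>"
    using r_le_rmax[OF \<open>k < i\<close>] rmax_ge_1 by simp
  also have "\<dots> \<le> cmod (\<i> * of_real (rmax + 1) - of_real (cc i))"
    by (rule abs_Im_le_cmod)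
  finally show "r i \<le> cmod (\<i> * of_real (rmax + 1) - of_real (cc i))" .
qed

lemma closure_UN_first_letter:
  assumes W: "\<And>u. u \<in> W \<Longrightarrow> reduced u \<and> u \<noteq> [] \<and> S u \<subseteq> word_disk u"
    and x: "x \<in> closure (\<Union>u\<in>W. S u)"
  obtains i where "x \<in> closure (\<Union>u\<in>{u\<in>W. hd u = i}. S u)"
proof -
  define F where "F = {i. 1 \<le> i \<and> \<bar>cc i - Re x\<bar> \<le> 1 + rmax}"
  have hd: "k < hd u" "S u \<subseteq> disk (hd u)" if "u \<in> W" for u
    using W[OF that] word_disk_subset_disk[of u] by (auto simp: reduced_def)
  define Near where "Near = (\<Union>i\<in>F. \<Union>u\<in>{u\<in>W. hd u = i}. S u)"
  define Far where "Far = (\<Union>u\<in>{u\<in>W. hd u \<notin> F}. S u)"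
  have far: "Far \<inter> ball x 1 = {}"
  proof (rule ccontr)
    assume "\<not> ?thesis"
    then obtain u z where u: "u \<in> W" "hd u \<notin> F" and z: "z \<in> S u" "dist x z < 1"
      by (auto simp: Far_def)
    have "cmod (z - of_real (cc (hd u))) \<le> rmax"
      using hd[OF u(1)] z(1) r_le_rmax[of "hd u"] by (auto simp: disk_def dist_norm norm_minus_commute)
    moreover have "\<bar>cc (hd u) - Re x\<bar> \<le> cmod (of_real (cc (hd u)) - x)"
      using abs_Re_le_cmod[of "of_real (cc (hd u)) - x"] by simp
    moreover have "cmod (of_real (cc (hd u)) - x) \<le> cmod (z - of_real (cc (hd u))) + dist x z"
      using norm_triangle_ineq[of "of_real (cc (hd u)) - z" "z - x"]
      by (simp add: dist_norm norm_minus_commute)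
    ultimately have "\<bar>cc (hd u) - Re x\<bar> \<le> 1 + rmax"
      using z(2) by linarith
    then show False
      using u hd(1)[OF u(1)] by (auto simp: F_def)
  qed
  have "(\<Union>u\<in>W. S u) = Near \<union> Far"
    unfolding Near_def Far_def by blast
  then have "x \<in> closure Near"
    using closure_Un_far[OF _ far zero_less_one] x by simp
  moreover have "finite F"
    unfolding F_def by (rule finite_centres_near)
  ultimately obtain i where "x \<in> closure (\<Union>u\<in>{u\<in>W. hd u = i}. S u)"
    unfolding Near_def closure_UN_finite[OF \<open>finite F\<close>] by blast
  then show ?thesis
    by (rule that)
qed

lemma closure_UN_gen_map_image:
  assumes i: "1 \<le> i"
    and img: "closure (\<Union>u\<in>U. gen_map c r i ` T u)
                \<subseteq> (\<Union>u\<in>U. closure (gen_map c r i ` T u)) \<union> range centre_image"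
  shows "closure (\<Union>u\<in>U. T u) \<subseteq> (\<Union>u\<in>U. closure (T u)) \<union> range centre_image"
proof
  fix x
  assume x: "x \<in> closure (\<Union>u\<in>U. T u)"
  define h where "h = gen_map c r i"
  have inv: "h (h y) = y" for y
    using gen_map_involutive[OF i] by (simp add: h_def)
  have cont: "isCont h y" if "y \<noteq> of_real (cc i)" for y
    using isCont_inversion[OF that] by (simp add: h_def gen_map_eq)
  show "x \<in> (\<Union>u\<in>U. closure (T u)) \<union> range centre_image"
  proof (cases "x = of_real (cc i)")
    case True
    then have "x = centre_image ([], i)"
      by (simp add: centre_image_def)
    then show ?thesis
      by blast
  next
    case False
    have "h x \<in> closure (\<Union>u\<in>U. h ` T u)"
      using isCont_closure_image[OF x cont[OF False]] by (simp add: image_UN)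
    then consider u where "u \<in> U" "h x \<in> closure (h ` T u)" | vj where "h x = centre_image vj"
      using img unfolding h_def by blast
    then show ?thesis
    proof cases
      case (1 u)
      have "h x \<noteq> of_real (cc i)"
        using False inv[of x] by (auto simp: h_def gen_map_eq)
      then have "x \<in> closure (T u)"
        using closure_image_involution[OF inv cont 1(2)] by blast
      then show ?thesis
        using 1(1) by blast
    next
      case (2 vj)
      then have "x = centre_image (i # fst vj, snd vj)"
        using inv[of x] by (simp add: centre_image_def h_def)
      then show ?thesis
        by blast
    qed
  qed
qed

lemma closure_UN_subsets_word_disks:
  assumes "\<And>u. u \<in> W \<Longrightarrow> reduced u \<and> u \<noteq> [] \<and> length u \<le> n \<and> S u \<subseteq> word_disk u"
  shows "closure (\<Union>u\<in>W. S u) \<subseteq> (\<Union>u\<in>W. closure (S u)) \<union> range centre_image"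
  using assms
proof (induction n arbitrary: W S)
  case 0
  then have "W = {}"
    by fastforce
  then show ?case
    by simp
next
  case (Suc n)
  show ?case
  proof
    fix x
    assume x: "x \<in> closure (\<Union>u\<in>W. S u)"
    obtain i where xi: "x \<in> closure (\<Union>u\<in>{u\<in>W. hd u = i}. S u)"
      using closure_UN_first_letter[OF _ x] Suc.prems by blast
    define W' where "W' = {u. u \<noteq> [] \<and> i # u \<in> W}"
    have split: "(\<Union>u\<in>{u\<in>W. hd u = i}. S u) \<subseteq> (\<Union>u\<in>{u\<in>W. u = [i]}. S u) \<union> (\<Union>u\<in>W'. S (i # u))"
    proof
      fix y
      assume "y \<in> (\<Union>u\<in>{u\<in>W. hd u = i}. S u)"
      then obtain u where u: "u \<in> W" "hd u = i" "y \<in> S u"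
        by blast
      moreover have "u \<noteq> []"
        using Suc.prems u(1) by blast
      ultimately obtain u' where "u = i # u'"
        by (cases u) auto
      then show "y \<in> (\<Union>u\<in>{u\<in>W. u = [i]}. S u) \<union> (\<Union>u\<in>W'. S (i # u))"
        using u by (cases "u' = []") (auto simp: W'_def)
    qed
    then have "x \<in> closure (\<Union>u\<in>{u\<in>W. u = [i]}. S u) \<union> closure (\<Union>u\<in>W'. S (i # u))"
      using closure_mono[OF split] xi closure_Un by blast
    moreover have "closure (\<Union>u\<in>{u\<in>W. u = [i]}. S u) \<subseteq> (\<Union>u\<in>W. closure (S u))"
    proof (cases "[i] \<in> W")
      case True
      then have "{u\<in>W. u = [i]} = {[i]}"
        by blast
      then show ?thesis
        using True by (simp only: image_insert image_empty Union_insert Union_empty Un_empty_right) blast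
    next
      case False
      then have "{u\<in>W. u = [i]} = {}"
        by blast
      then show ?thesis
        by (simp only: image_empty Union_empty closure_empty empty_subsetI)
    qed
    moreover have "closure (\<Union>u\<in>W'. S (i # u)) \<subseteq> (\<Union>u\<in>W. closure (S u)) \<union> range centre_image"
    proof (cases "W' = {}")
      case False
      then obtain u0 where "u0 \<in> W'"
        by blast
      then have i: "1 \<le> i"
        using Suc.prems reduced_letter_ge_1[of "i # u0" i] by (simp add: W'_def)
      have "reduced u \<and> u \<noteq> [] \<and> length u \<le> n \<and> gen_map c r i ` S (i # u) \<subseteq> word_disk u"
        if "u \<in> W'" for u
      proof -
        have u: "u \<noteq> []" "reduced (i # u)" "length (i # u) \<le> Suc n" "S (i # u) \<subseteq> word_disk (i # u)"
          using that Suc.prems[of "i # u"] by (simp_all add: W'_def)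
        then have "gen_map c r i ` S (i # u) \<subseteq> gen_map c r i ` gen_map c r i ` word_disk u"
          by (simp add: word_disk_Cons image_mono)
        then show ?thesis
          using u reduced_ConsD gen_map_involutive[OF i] by (simp add: image_image)
      qed
      then have "closure (\<Union>u\<in>W'. gen_map c r i ` S (i # u))
          \<subseteq> (\<Union>u\<in>W'. closure (gen_map c r i ` S (i # u))) \<union> range centre_image"
        by (rule Suc.IH)
      then have "closure (\<Union>u\<in>W'. S (i # u)) \<subseteq> (\<Union>u\<in>W'. closure (S (i # u))) \<union> range centre_image"
        by (rule closure_UN_gen_map_image[OF i])
      then show ?thesis
        by (auto simp: W'_def)
    qed simp
    ultimately show "x \<in> (\<Union>u\<in>W. closure (S u)) \<union> range centre_image"
      by blast
  qed
qed

definition orbit_piece :: "complex \<Rightarrow> nat \<Rightarrow> nat list \<Rightarrow> complex set" where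
  "orbit_piece z n u = (if length u = n then word_disk u else {word_map c r u z})"

lemma orbit_subset_orbit_pieces:
  assumes z1: "outside_disks z1" and n: "1 \<le> n"
  shows "(\<lambda>g. g z1) ` Gamma
     \<subseteq> insert z1 (\<Union>u\<in>{u. reduced u \<and> 1 \<le> length u \<and> length u \<le> n}. orbit_piece z1 n u)"
proof
  fix y
  assume "y \<in> (\<lambda>g. g z1) ` Gamma"
  then obtain w where w: "reduced w" "y = word_map c r w z1"
    using gen_by_reduced_word by blast
  consider "w = []" | "w \<noteq> []" "length w < n" | "n \<le> length w"
    by linarith
  then show "y \<in> insert z1 (\<Union>u\<in>{u. reduced u \<and> 1 \<le> length u \<and> length u \<le> n}. orbit_piece z1 n u)"
  proof cases
    case 1
    then show ?thesis
      using w by simp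
  next
    case 2
    then show ?thesis
      using w by (intro insertI2 UN_I[of w]) (auto simp: orbit_piece_def Suc_le_eq)
  next
    case 3
    have "reduced (take n w)"
      using w(1) reduced_appendD[of "take n w" "drop n w"] by simp
    moreover have "y \<in> word_disk (take n w)"
      using word_map_mem_word_disk_take[OF z1 w(1) n 3] w(2) by simp
    ultimately show ?thesis
      using n 3 by (intro insertI2 UN_I[of "take n w"]) (auto simp: orbit_piece_def)
  qed
qed

lemma limit_set_subset_word_disks:
  assumes z1: "outside_disks z1" "0 < Im z1" and n: "1 \<le> n"
  shows "of_real ` limit_set Gamma z1 \<subseteq> (\<Union>u\<in>reduced_words k n. word_disk u) \<union> range centre_image"
proof
  fix x :: complex
  assume "x \<in> of_real ` limit_set Gamma z1"
  then have lim: "x islimpt (\<lambda>g. g z1) ` Gamma" and "Im x = 0"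
    by (auto simp: limit_set_def)
  define W where "W = {u. reduced u \<and> 1 \<le> length u \<and> length u \<le> n}"
  have W: "reduced u \<and> u \<noteq> [] \<and> length u \<le> n \<and> orbit_piece z1 n u \<subseteq> word_disk u" if "u \<in> W" for u
    using that word_map_mem_word_disk_take[OF z1(1), of u "length u"] by (auto simp: W_def orbit_piece_def)
  have "x islimpt (\<Union>u\<in>W. orbit_piece z1 n u)"
    using islimpt_subset[OF lim orbit_subset_orbit_pieces[OF z1(1) n]] islimpt_insert
    unfolding W_def by blast
  then have "x \<in> closure (\<Union>u\<in>W. orbit_piece z1 n u)"
    by (simp add: closure_def)
  then consider u where "u \<in> W" "x \<in> closure (orbit_piece z1 n u)" | "x \<in> range centre_image"
    using closure_UN_subsets_word_disks[OF W] by blast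
  then show "x \<in> (\<Union>u\<in>reduced_words k n. word_disk u) \<union> range centre_image"
  proof cases
    case (1 u)
    have u: "reduced u" "u \<noteq> []"
      using W[OF 1(1)] by auto
    show ?thesis
    proof (cases "length u = n")
      case True
      then have "x \<in> word_disk u" "u \<in> reduced_words k n"
        using 1(2) u by (simp_all add: orbit_piece_def word_disk_eq_cball reduced_words_eq)
      then show ?thesis
        by blast
    next
      case False
      then have "x = word_map c r u z1"
        using 1(2) by (simp add: orbit_piece_def)
      moreover have "0 < Im (word_map c r u z1)"
        using Im_word_map_pos u(1) z1(2) by (simp add: reduced_def)
      ultimately show ?thesis
        using \<open>Im x = 0\<close> by simp
    qed
  qed blast
qed

lemma limit_set_subset_word_intervals:
  assumes z1: "outside_disks z1" "0 < Im z1" and n: "1 \<le> n"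
  shows "limit_set Gamma z1
     \<subseteq> (\<Union>u\<in>reduced_words k n. {centre u - rad u .. centre u + rad u}) \<union> range (Re \<circ> centre_image)"
proof
  fix x
  assume "x \<in> limit_set Gamma z1"
  then consider u where "u \<in> reduced_words k n" "of_real x \<in> word_disk u" | vj where "of_real x = centre_image vj"
    using limit_set_subset_word_disks[OF assms] by blast
  then show "x \<in> (\<Union>u\<in>reduced_words k n. {centre u - rad u .. centre u + rad u}) \<union> range (Re \<circ> centre_image)"
  proof cases
    case (1 u)
    then have "reduced u" "u \<noteq> []"
      using n by (auto simp: reduced_words_eq)
    have "(of_real x :: complex) \<in> cball (of_real (centre u)) (rad u)"
      using 1(2) unfolding word_disk_eq_cball[OF \<open>reduced u\<close> \<open>u \<noteq> []\<close>] .
    then have "\<bar>x - centre u\<bar> \<le> rad u"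
      by (simp only: mem_cball dist_of_real dist_real_def abs_minus_commute)
    then show ?thesis
      using 1(1) by (intro UnI1 UN_I[of u]) (auto simp: abs_le_iff)
  next
    case (2 vj)
    then have "x = (Re \<circ> centre_image) vj"
      by (metis Re_complex_of_real comp_apply)
    then show ?thesis
      by blast
  qed
qed

text \<open>Here the integer centres are used: \<bar>c i - c j\<bar> is an integer exceeding r j.\<close>

lemma gap_ge_floor:
  assumes "1 \<le> i" "1 \<le> j" "i \<noteq> j"
  shows "real_of_int (\<lfloor>r j\<rfloor> + 1) - r j \<le> \<bar>cc i - cc j\<bar> - r j"
proof -
  have abs_eq: "\<bar>cc i - cc j\<bar> = real_of_int \<bar>c i - c j\<bar>"
    by simp
  have "r j < real_of_int \<bar>c i - c j\<bar>"
    using dist_centres_gt[OF assms] r_pos[OF assms(1)] by simp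
  then have "\<lfloor>r j\<rfloor> < \<bar>c i - c j\<bar>"
    by (rule floor_less_iff[THEN iffD2])
  then have "\<lfloor>r j\<rfloor> + 1 \<le> \<bar>c i - c j\<bar>"
    by simp
  then show ?thesis
    unfolding abs_eq by (simp only: of_int_le_iff diff_right_mono)
qed

lemma uniform_gap: "\<exists>e>0. \<forall>i j. k < i \<longrightarrow> k < j \<longrightarrow> i \<noteq> j \<longrightarrow> e \<le> \<bar>cc i - cc j\<bar> - r j"
proof -
  define gap where "gap j = real_of_int (\<lfloor>r j\<rfloor> + 1) - r j" for j
  define F where "F = {j. k < j \<and> 1/2 \<le> r j}"
  have "finite F"
    unfolding F_def by (rule finite_large_radii) simp
  define e where "e = Min (insert (1/2) (gap ` F))"
  have e_pos: "0 < e"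
    using \<open>finite F\<close> by (simp add: e_def gap_def)
  have e_le: "e \<le> gap j" if "k < j" for j
  proof (cases "j \<in> F")
    case True
    then show ?thesis
      using \<open>finite F\<close> by (simp add: e_def)
  next
    case False
    then have "0 < r j" "r j < 1/2"
      using that r_pos[of j] by (auto simp: F_def)
    then have "\<lfloor>r j\<rfloor> = 0"
      by (simp add: floor_eq_iff)
    then have "1/2 \<le> gap j"
      using \<open>r j < 1/2\<close> by (simp add: gap_def)
    moreover have "e \<le> 1/2"
      using \<open>finite F\<close> unfolding e_def by (intro Min_le) auto
    ultimately show ?thesis
      by linarith
  qed
  have "e \<le> \<bar>cc i - cc j\<bar> - r j" if "k < i" "k < j" "i \<noteq> j" for i j
    using e_le[of j] gap_ge_floor[of i j] that unfolding gap_def by linarith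
  then show ?thesis
    using e_pos by blast
qed

lemma finite_large_contraction:
  "finite {(i, j). k < i \<and> k < j \<and> i \<noteq> j \<and> 1/2 < contraction i j}"
proof -
  obtain e where e: "0 < e" "\<And>i j. k < i \<Longrightarrow> k < j \<Longrightarrow> i \<noteq> j \<Longrightarrow> e \<le> \<bar>cc i - cc j\<bar> - r j"
    using uniform_gap by blast
  define F1 where "F1 = {i. k < i \<and> e/2 \<le> r i}"
  have "finite F1"
    unfolding F1_def using e(1) by (intro finite_large_radii) simp
  define M where "M = Max (insert 0 ((\<lambda>i. \<bar>cc i\<bar>) ` F1))"
  define F2 where "F2 = {j. 1 \<le> j \<and> \<bar>cc j - 0\<bar> \<le> M + 3 * rmax}"
  have "{(i, j). k < i \<and> k < j \<and> i \<noteq> j \<and> 1/2 < contraction i j} \<subseteq> F1 \<times> F2"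
  proof safe
    fix i j
    assume ij: "k < i" "k < j" "i \<noteq> j" and big: "1/2 < contraction i j"
    have "0 < \<bar>cc i - cc j\<bar> - r j"
      using e ij by (meson less_le_trans)
    then have "\<bar>cc i - cc j\<bar> - r j < 2 * r i"
      using big by (simp add: contraction_def field_simps)
    then show i: "i \<in> F1"
      using e(2)[OF ij] ij by (simp add: F1_def)
    have "\<bar>cc i\<bar> \<le> M"
      using i \<open>finite F1\<close> unfolding M_def by (intro Max_ge) auto
    then show "j \<in> F2"
      using \<open>\<bar>cc i - cc j\<bar> - r j < 2 * r i\<close> r_le_rmax[OF ij(1)] r_le_rmax[OF ij(2)] ij(2)
      by (simp add: F2_def)
  qed
  moreover have "finite F2"
    unfolding F2_def by (rule finite_centres_near)
  ultimately show ?thesis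
    using \<open>finite F1\<close> by (meson finite_SigmaI finite_subset)
qed

lemma uniform_contraction:
  "\<exists>q. 0 \<le> q \<and> q < 1 \<and> (\<forall>i j. k < i \<longrightarrow> k < j \<longrightarrow> i \<noteq> j \<longrightarrow> contraction i j \<le> q)"
proof -
  define P where "P = {(i, j). k < i \<and> k < j \<and> i \<noteq> j \<and> 1/2 < contraction i j}"
  have "finite P"
    unfolding P_def by (rule finite_large_contraction)
  define q where "q = Max (insert (1/2) ((\<lambda>(i, j). contraction i j) ` P))"
  have "q < 1"
    using \<open>finite P\<close> contraction_bounds by (auto simp: q_def P_def)
  moreover have "1/2 \<le> q"
    using \<open>finite P\<close> unfolding q_def by (intro Max_ge) auto
  moreover have "contraction i j \<le> q" if "k < i" "k < j" "i \<noteq> j" for i j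
  proof (cases "(i, j) \<in> P")
    case True
    then show ?thesis
      using \<open>finite P\<close> unfolding q_def by (intro Max_ge) force+
  next
    case False
    then show ?thesis
      using that \<open>1/2 \<le> q\<close> by (auto simp: P_def)
  qed
  ultimately show ?thesis
    by (intro exI[of _ q]) auto
qed

definition contraction_bound :: real where
  "contraction_bound = (SOME q. 0 \<le> q \<and> q < 1 \<and>
      (\<forall>i j. k < i \<longrightarrow> k < j \<longrightarrow> i \<noteq> j \<longrightarrow> contraction i j \<le> q))"

lemma contraction_bound:
  shows "0 \<le> contraction_bound" "contraction_bound < 1"
    and "k < i \<Longrightarrow> k < j \<Longrightarrow> i \<noteq> j \<Longrightarrow> contraction i j \<le> contraction_bound"
  using someI_ex[OF uniform_contraction] by (simp_all add: contraction_bound_def)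

lemma rad_le_geometric:
  "reduced u \<Longrightarrow> u \<noteq> [] \<Longrightarrow> rad u \<le> rmax * (contraction_bound\<^sup>2) ^ (length u - 1)"
proof (induction u rule: disk_params.induct)
  case (2 i)
  then show ?case
    using r_le_rmax by (simp add: reduced_def)
next
  case (3 i j u)
  have red: "reduced (j # u)" and ij: "k < i" "k < j" "i \<noteq> j"
    using "3.prems" by (auto simp: reduced_Cons_Cons reduced_def)
  have "(contraction i j)\<^sup>2 \<le> contraction_bound\<^sup>2"
    using contraction_bounds[of i j] contraction_bound(3)[OF ij] ij by (intro power_mono) auto
  then have "(contraction i j)\<^sup>2 * rad (j # u) \<le> contraction_bound\<^sup>2 * rad (j # u)"
    using rad_pos[OF red] by (intro mult_right_mono) auto
  then have "rad (i # j # u) \<le> contraction_bound\<^sup>2 * rad (j # u)"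
    using rad_Cons_Cons_le[OF "3.prems"(1)] by linarith
  also have "\<dots> \<le> contraction_bound\<^sup>2 * (rmax * (contraction_bound\<^sup>2) ^ (length (j # u) - 1))"
    using "3.IH"[OF red] by (intro mult_left_mono) auto
  finally show ?case
    by (simp add: algebra_simps)
qed simp

lemma infsum_reduced_words_1:
  "(\<Sum>\<^sub>\<infinity>w\<in>reduced_words k 1. ennreal (word_radius c r w powr \<alpha>)) = (\<Sum>\<^sub>\<infinity>i\<in>{k<..}. ennreal (r i powr \<alpha>))"
proof -
  have "reduced_words k 1 = (\<lambda>i. [i]) ` {k<..}"
    by (auto simp: reduced_words_eq reduced_def length_Suc_conv)
  then have "(\<Sum>\<^sub>\<infinity>w\<in>reduced_words k 1. ennreal (word_radius c r w powr \<alpha>))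
      = (\<Sum>\<^sub>\<infinity>i\<in>{k<..}. ennreal (word_radius c r [i] powr \<alpha>))"
    by (simp add: infsum_reindex inj_on_def comp_def)
  also have "\<dots> = (\<Sum>\<^sub>\<infinity>i\<in>{k<..}. ennreal (r i powr \<alpha>))"
    by (intro infsum_cong) (simp add: word_radius_eq_rad reduced_def)
  finally show ?thesis .
qed

lemma infsum_reduced_words_le:
  assumes dec: "\<forall>n\<ge>2. (\<Sum>\<^sub>\<infinity>w\<in>reduced_words k n. ennreal (word_radius c r w powr \<alpha>))
                   \<le> (\<Sum>\<^sub>\<infinity>w\<in>reduced_words k (n - 1). ennreal (word_radius c r w powr \<alpha>))"
    and n: "1 \<le> n"
  shows "(\<Sum>\<^sub>\<infinity>w\<in>reduced_words k n. ennreal (word_radius c r w powr \<alpha>)) \<le> (\<Sum>\<^sub>\<infinity>i\<in>{k<..}. ennreal (r i powr \<alpha>))"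
  using n
proof (induction n rule: dec_induct)
  case base
  then show ?case
    using infsum_reduced_words_1 by simp
next
  case (step m)
  then show ?case
    using dec[rule_format, of "Suc m"] by simp
qed

lemma hausdorff_pre_limit_set_le:
  assumes z1: "outside_disks z1" "0 < Im z1" and n: "1 \<le> n" and s: "\<alpha> \<le> s"
    and \<tau>: "0 < \<tau>" "\<tau> \<le> \<delta>" and small: "\<And>u. u \<in> reduced_words k n \<Longrightarrow> 2 * rad u \<le> \<tau>"
  shows "hausdorff_pre s \<delta> (limit_set Gamma z1)
       \<le> ennreal (2 powr s * \<tau> powr (s - \<alpha>)) * (\<Sum>\<^sub>\<infinity>u\<in>reduced_words k n. ennreal (word_radius c r u powr \<alpha>))"
proof -
  let ?I = "\<lambda>u. {centre u - rad u .. centre u + rad u}"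
  have rad: "0 < rad u" "word_radius c r u = rad u" "diameter (?I u) = 2 * rad u"
    if "u \<in> reduced_words k n" for u
  proof -
    have u: "reduced u" "u \<noteq> []"
      using that n by (auto simp: reduced_words_eq)
    then show "0 < rad u" "word_radius c r u = rad u"
      by (simp_all add: rad_pos word_radius_eq_rad)
    then show "diameter (?I u) = 2 * rad u"
      by (simp add: diameter_closed_interval)
  qed
  have "hausdorff_pre s \<delta> (limit_set Gamma z1) \<le> (\<Sum>\<^sub>\<infinity>u\<in>reduced_words k n. ennreal (diameter (?I u) powr s))"
    using rad small \<tau> by (intro hausdorff_pre_le_infsum[OF limit_set_subset_word_intervals[OF z1 n]]) force+
  also have "\<dots> \<le> (\<Sum>\<^sub>\<infinity>u\<in>reduced_words k n.
                    ennreal (2 powr s * \<tau> powr (s - \<alpha>)) * ennreal (word_radius c r u powr \<alpha>))"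
  proof (rule infsum_mono[OF nonneg_summable_on_complete nonneg_summable_on_complete])
    fix u
    assume u: "u \<in> reduced_words k n"
    define \<rho> where "\<rho> = rad u"
    have \<rho>: "0 < \<rho>" "\<rho> \<le> \<tau>"
      using rad[OF u] small[OF u] by (auto simp: \<rho>_def)
    have "(2 * \<rho>) powr s = 2 powr s * (\<rho> powr \<alpha> * \<rho> powr (s - \<alpha>))"
      using \<rho> by (simp add: powr_mult flip: powr_add)
    also have "\<dots> \<le> 2 powr s * (\<rho> powr \<alpha> * \<tau> powr (s - \<alpha>))"
      using \<rho> s by (intro mult_left_mono powr_mono2) auto
    finally have "ennreal ((2 * \<rho>) powr s) \<le> ennreal (2 powr s * \<tau> powr (s - \<alpha>) * \<rho> powr \<alpha>)"
      by (intro ennreal_leI) (simp add: algebra_simps)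
    also have "\<dots> = ennreal (2 powr s * \<tau> powr (s - \<alpha>)) * ennreal (\<rho> powr \<alpha>)"
      by (rule ennreal_mult) auto
    finally show "ennreal (diameter (?I u) powr s)
        \<le> ennreal (2 powr s * \<tau> powr (s - \<alpha>)) * ennreal (word_radius c r u powr \<alpha>)"
      using rad[OF u] by (simp add: \<rho>_def)
  qed simp_all
  also have "\<dots> \<le> ennreal (2 powr s * \<tau> powr (s - \<alpha>)) * (\<Sum>\<^sub>\<infinity>u\<in>reduced_words k n. ennreal (word_radius c r u powr \<alpha>))"
    by (rule infsum_cmult_right_le_ennreal)
  finally show ?thesis .
qed

lemma exists_level_small:
  assumes "0 < \<tau>"
  shows "\<exists>n\<ge>1. \<forall>u\<in>reduced_words k n. 2 * rad u \<le> \<tau>"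
proof -
  have "(\<lambda>m. (contraction_bound\<^sup>2) ^ m) \<longlonglongrightarrow> 0"
    using contraction_bound(1,2) by (intro LIMSEQ_realpow_zero) (auto simp: power_less_one_iff)
  moreover have "0 < \<tau> / (2 * rmax)"
    using assms rmax_ge_1 by simp
  ultimately have "\<forall>\<^sub>F m in sequentially. (contraction_bound\<^sup>2) ^ m < \<tau> / (2 * rmax)"
    by (rule order_tendstoD(2))
  then obtain m where m: "(contraction_bound\<^sup>2) ^ m < \<tau> / (2 * rmax)"
    by (meson eventually_sequentially order_refl)
  have "2 * rad u \<le> \<tau>" if "u \<in> reduced_words k (Suc m)" for u
  proof -
    have "reduced u" "length u = Suc m"
      using that by (auto simp: reduced_words_eq)
    then have "rad u \<le> rmax * (contraction_bound\<^sup>2) ^ m"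
      using rad_le_geometric[of u] by fastforce
    also have "\<dots> \<le> rmax * (\<tau> / (2 * rmax))"
      using m rmax_ge_1 by (intro mult_left_mono) auto
    finally show ?thesis
      using rmax_ge_1 by (simp add: field_simps)
  qed
  then show ?thesis
    by (intro exI[of _ "Suc m"]) auto
qed

lemma hausdorff_measure_limit_set_eq_0:
  assumes z1: "outside_disks z1" "0 < Im z1" and s: "\<alpha> < s"
    and bound: "\<And>n. 1 \<le> n \<Longrightarrow> (\<Sum>\<^sub>\<infinity>w\<in>reduced_words k n. ennreal (word_radius c r w powr \<alpha>))
                                \<le> (\<Sum>\<^sub>\<infinity>i\<in>{k<..}. ennreal (r i powr \<alpha>))"
  shows "hausdorff_measure s (limit_set Gamma z1) = 0"
proof -
  obtain S where S: "(\<Sum>\<^sub>\<infinity>i\<in>{k<..}. ennreal (r i powr \<alpha>)) = ennreal S" "0 \<le> S"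
    using summable_radii by (cases "\<Sum>\<^sub>\<infinity>i\<in>{k<..}. ennreal (r i powr \<alpha>)" rule: ennreal_cases) auto
  have pre_le: "hausdorff_pre s \<delta> (limit_set Gamma z1) \<le> ennreal \<epsilon>" if \<delta>: "0 < \<delta>" and \<epsilon>: "0 < \<epsilon>" for \<delta> \<epsilon>
  proof -
    obtain \<tau> where \<tau>: "0 < \<tau>" "\<tau> \<le> \<delta>" "\<tau> powr (s - \<alpha>) \<le> \<epsilon> / (2 powr s * (S + 1))"
      using exists_powr_le[of "\<epsilon> / (2 powr s * (S + 1))" "s - \<alpha>" \<delta>] \<delta> \<epsilon> s S(2) by auto
    then have "2 powr s * \<tau> powr (s - \<alpha>) * S \<le> 2 powr s * (\<epsilon> / (2 powr s * (S + 1))) * (S + 1)"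
      using S(2) \<epsilon> by (intro mult_mono) auto
    also have "\<dots> = \<epsilon>"
      using S(2) by simp
    finally have small_factor: "2 powr s * \<tau> powr (s - \<alpha>) * S \<le> \<epsilon>" .
    obtain n where n: "1 \<le> n" "\<And>u. u \<in> reduced_words k n \<Longrightarrow> 2 * rad u \<le> \<tau>"
      using exists_level_small[OF \<tau>(1)] by blast
    have "hausdorff_pre s \<delta> (limit_set Gamma z1)
        \<le> ennreal (2 powr s * \<tau> powr (s - \<alpha>)) * (\<Sum>\<^sub>\<infinity>u\<in>reduced_words k n. ennreal (word_radius c r u powr \<alpha>))"
      by (rule hausdorff_pre_limit_set_le[OF z1 n(1) less_imp_le[OF s] \<tau>(1,2) n(2)])
    also have "\<dots> \<le> ennreal (2 powr s * \<tau> powr (s - \<alpha>)) * ennreal S"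
      using bound[OF n(1)] S(1) by (intro mult_left_mono) auto
    also have "\<dots> = ennreal (2 powr s * \<tau> powr (s - \<alpha>) * S)"
      using S(2) by (simp add: ennreal_mult)
    also have "\<dots> \<le> ennreal \<epsilon>"
      by (rule ennreal_leI[OF small_factor])
    finally show ?thesis .
  qed
  have "hausdorff_pre s \<delta> (limit_set Gamma z1) \<le> 0" if "0 < \<delta>" for \<delta>
    by (rule ennreal_le_epsilon) (simp add: pre_le[OF that])
  then have "(SUP \<delta>\<in>{0<..}. hausdorff_pre s \<delta> (limit_set Gamma z1)) = (SUP \<delta>\<in>{(0::real)<..}. 0)"
    by (intro SUP_cong) simp_all
  then show ?thesis
    by (simp add: hausdorff_measure_def)
qed

end

theorem lemma3p2:
  fixes c :: "nat \<Rightarrow> int" and r :: "nat \<Rightarrow> real" and k :: nat and \<alpha> :: real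
    and z0 :: complex
  assumes pos: "\<forall>i\<ge>1. 0 < r i"
    and disj: "\<forall>i\<ge>1. \<forall>j\<ge>1. i \<noteq> j \<longrightarrow>
               cball (of_int (c i) :: complex) (r i) \<inter> cball (of_int (c j)) (r j) = {}"
    and alpha: "0 < \<alpha>"
    and fin: "(\<Sum>\<^sub>\<infinity>i\<in>{k<..}. ennreal (r i powr \<alpha>)) < \<infinity>"
    and dec: "\<forall>n\<ge>2. (\<Sum>\<^sub>\<infinity>w\<in>reduced_words k n. ennreal (word_radius c r w powr \<alpha>))
                   \<le> (\<Sum>\<^sub>\<infinity>w\<in>reduced_words k (n - 1). ennreal (word_radius c r w powr \<alpha>))"
    and z0: "z0 \<in> upper"
  shows "hausdorff_dim (limit_set (gen_by {gen_map c r i | i. k < i}) z0) \<le> \<alpha>"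
proof -
  interpret summable_disks c r k \<alpha>
    using pos disj alpha fin by unfold_locales
  define z1 where "z1 = \<i> * of_real (rmax + 1)"
  have z1: "outside_disks z1" "0 < Im z1"
    using outside_disks_high_point rmax_ge_1 by (simp_all add: z1_def)
  show ?thesis
  proof (rule hausdorff_dim_le[OF less_imp_le[OF alpha]])
    fix s
    assume "\<alpha> < s"
    have "hausdorff_measure s (limit_set Gamma z0) \<le> hausdorff_measure s (limit_set Gamma z1)"
      using z0 z1(2) by (intro hausdorff_measure_mono limit_set_Gamma_base_point) (simp_all add: upper_def)
    also have "\<dots> = 0"
      using infsum_reduced_words_le[OF dec] by (intro hausdorff_measure_limit_set_eq_0[OF z1 \<open>\<alpha> < s\<close>])
    finally show "hausdorff_measure s (limit_set Gamma z0) = 0"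
      by simp
  qed
qed

end
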